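(* Fix $\epsilon\in(0,\pi)$ and choose $\delta\in(0,1)$ such that $\frac{-2\delta^2-2\delta+4}{\delta^2+10\delta+4}\ge\cos\epsilon$. Then for any $x=(x_1,\dots,x_6)\in\mathbb{R}^6_{>1}$ with $\max_{2\le i\le6}x_i\le2$ and $x_1=1+\delta$, $$\phi(x)\ge\frac{-2\delta^2-2\delta+4}{\delta^2+10\delta+4}\ge\cos\epsilon,$$ so in particular the angle $\alpha=\arccos(\max\{-1,\min\{\phi(x),1\}\})$ satisfies $\cos\alpha\ge\cos\epsilon$.
   Context: For $x=(x_1,\dots,x_6)\in\mathbb{R}^6_{\ge1}$ define $$\phi(x)=\frac{x_2x_3+x_5x_6+x_1x_2x_5+x_1x_3x_6-x_1^2x_4+x_4}{\sqrt{2x_1x_2x_6+x_1^2+x_2^2+x_6^2-1}\sqrt{2x_1x_3x_5+x_1^2+x_3^2+x_5^2-1}}.$$ (This is the cosine of the extended dihedral angle at edge $e_1$ of a generalized hyper-ideal tetrahedron whose edges have cosh-lengths $x_1,\dots,x_6$, with $e_{i+3}$ opposite $e_i$.) *)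

theory Defs
  imports "HOL-Analysis.Analysis"
begin

text \<open>Cosine of the extended dihedral angle at edge e1 of a generalized hyper-ideal
tetrahedron with edge cosh-lengths x1..x6 (e(i+3) opposite e(i)).\<close>
definition phi :: "real \<Rightarrow> real \<Rightarrow> real \<Rightarrow> real \<Rightarrow> real \<Rightarrow> real \<Rightarrow> real" where
  "phi x1 x2 x3 x4 x5 x6 =
     (x2*x3 + x5*x6 + x1*x2*x5 + x1*x3*x6 - x1^2*x4 + x4) /
     (sqrt (2*x1*x2*x6 + x1^2 + x2^2 + x6^2 - 1) *
      sqrt (2*x1*x3*x5 + x1^2 + x3^2 + x5^2 - 1))"

end

theory Submission
  imports Defs
begin

text \<open>Each square root in the denominator of \<open>phi\<close> is at most the corresponding factor
  \<open>x2 + x1 x6\<close>, resp. \<open>x3 + x1 x5\<close>, and the numerator is the product \<open>D\<close> of these factors minus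
  \<open>(x1\<^sup>2 - 1)(x5 x6 + x4)\<close>. With \<open>x4, x6 \<le> 2\<close> this correction is at most \<open>3 (x1 - 1)/(x1 + 1)\<close>
  times \<open>D\<close>, so \<open>phi \<ge> 2 (2 - x1)/(x1 + 1)\<close>, which for \<open>x1 = 1 + \<delta>\<close> dominates the stated bound.\<close>

lemma sqrt_face_term_le:
  fixes a b c :: real
  assumes "1 \<le> a" "1 \<le> b" "1 \<le> c"
  shows "sqrt (2*a*b*c + a^2 + b^2 + c^2 - 1) \<le> b + a*c"
proof (rule real_le_lsqrt)
  show "0 \<le> b + a*c" using assms by simp
  have "(a^2 - 1) * (c^2 - 1) \<ge> 0" using assms by (simp add: one_le_power)
  moreover have "2*a*b*c + a^2 + b^2 + c^2 - 1 = (b + a*c)^2 - (a^2 - 1) * (c^2 - 1)"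
    by (simp add: algebra_simps power2_eq_square)
  ultimately show "2*a*b*c + a^2 + b^2 + c^2 - 1 \<le> (b + a*c)^2" by linarith
qed

lemma phi_ge_if_numerator_ge:
  fixes t x1 x2 x3 x4 x5 x6 :: real
  assumes "1 \<le> x1" "1 \<le> x2" "1 \<le> x3" "1 \<le> x5" "1 \<le> x6" "0 \<le> t"
    and "t * ((x2 + x1*x6) * (x3 + x1*x5)) \<le> x2*x3 + x5*x6 + x1*x2*x5 + x1*x3*x6 - x1^2*x4 + x4"
  shows "t \<le> phi x1 x2 x3 x4 x5 x6"
proof -
  let ?A = "2*x1*x2*x6 + x1^2 + x2^2 + x6^2 - 1"
  let ?B = "2*x1*x3*x5 + x1^2 + x3^2 + x5^2 - 1"
  have "x1^2 \<ge> 1" "x2^2 \<ge> 1" "x3^2 \<ge> 1" "x5^2 \<ge> 1" "x6^2 \<ge> 1"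
    using assms by (simp_all add: one_le_power)
  moreover have "x1*x2*x6 > 0" "x1*x3*x5 > 0"
    using assms by simp_all
  ultimately have A_pos: "?A > 0" and B_pos: "?B > 0" by linarith+
  then have denom_pos: "sqrt ?A * sqrt ?B > 0" by (intro mult_pos_pos real_sqrt_gt_zero)
  have "sqrt ?A * sqrt ?B \<le> (x2 + x1*x6) * (x3 + x1*x5)"
    using assms B_pos by (intro mult_mono sqrt_face_term_le) auto
  then have "t * (sqrt ?A * sqrt ?B) \<le> x2*x3 + x5*x6 + x1*x2*x5 + x1*x3*x6 - x1^2*x4 + x4"
    using assms(6,7) mult_left_mono order_trans by blast
  then show ?thesis
    unfolding phi_def using denom_pos by (simp add: pos_le_divide_eq)
qed

lemma three_mult_bound:
  fixes a y z :: real
  assumes "1 \<le> a" "1 \<le> y" "1 \<le> z" "z \<le> 2"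
  shows "(1 + a)^2 * (y*z + 2) \<le> 3 * ((1 + a*z) * (1 + a*y))"
proof -
  have a_le_sq: "a \<le> a^2" using assms by (simp add: power2_eq_square)
  \<comment> \<open>The difference of the two sides is affine in \<open>y\<close>; its slope and its value at \<open>y = 1\<close> are nonnegative.\<close>
  have slope_nonneg: "3*a + (2*a^2 - 2*a - 1)*z \<ge> 0"
  proof (cases "2*a^2 - 2*a - 1 \<ge> 0")
    case True
    then show ?thesis using assms by simp
  next
    case False
    then have "(2*a^2 - 2*a - 1)*z \<ge> (2*a^2 - 2*a - 1)*2"
      using assms by (intro mult_left_mono_neg) auto
    moreover have "3*a + (2*a^2 - 2*a - 1)*2 = 4*a^2 - a - 2" by (simp add: algebra_simps)
    ultimately show ?thesis using assms a_le_sq by linarith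
  qed
  have "2*a^2 + a - 1 \<ge> 0" using assms a_le_sq by linarith
  then have "(y - 1)*(3*a + (2*a^2 - 2*a - 1)*z) + (2*a^2 + a - 1)*(z - 1) \<ge> 0"
    using slope_nonneg assms by simp
  moreover have "3 * ((1 + a*z) * (1 + a*y)) - (1 + a)^2 * (y*z + 2)
      = (y - 1)*(3*a + (2*a^2 - 2*a - 1)*z) + (2*a^2 + a - 1)*(z - 1)"
    by (simp add: algebra_simps power2_eq_square)
  ultimately show ?thesis by linarith
qed

lemma phi_lower_bound:
  fixes x1 x2 x3 x4 x5 x6 :: real
  assumes "1 \<le> x1" "x1 \<le> 2" "1 \<le> x2" "1 \<le> x3" "x4 \<le> 2" "1 \<le> x5" "1 \<le> x6" "x6 \<le> 2"
  shows "2 * (2 - x1) / (x1 + 1) \<le> phi x1 x2 x3 x4 x5 x6"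
proof (rule phi_ge_if_numerator_ge)
  define D where "D = (x2 + x1*x6) * (x3 + x1*x5)"
  have D_ge: "(1 + x1*x6) * (1 + x1*x5) \<le> D"
    unfolding D_def using assms by (intro mult_mono) auto
  have "(x1 + 1)^2 * (x5*x6 + x4) \<le> (x1 + 1)^2 * (x5*x6 + 2)"
    using assms by simp
  also have "\<dots> \<le> 3 * ((1 + x1*x6) * (1 + x1*x5))"
    using three_mult_bound[of x1 x5 x6] assms by (simp add: add.commute)
  also have "\<dots> \<le> 3 * D" using D_ge by simp
  finally have bound: "(x1 + 1)^2 * (x5*x6 + x4) \<le> 3 * D" .
  have "2 * (2 - x1) / (x1 + 1) * D = D - (x1 - 1) / (x1 + 1) * (3 * D)"
    using assms by (simp add: field_simps)
  also have "\<dots> \<le> D - (x1 - 1) / (x1 + 1) * ((x1 + 1)^2 * (x5*x6 + x4))"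
    using assms bound by (intro diff_left_mono mult_left_mono) auto
  also have "\<dots> = D - (x1^2 - 1) * (x5*x6 + x4)"
    using assms by (simp add: field_simps power2_eq_square)
  also have "\<dots> = x2*x3 + x5*x6 + x1*x2*x5 + x1*x3*x6 - x1^2*x4 + x4"
    unfolding D_def by (simp add: algebra_simps power2_eq_square)
  finally show "2 * (2 - x1) / (x1 + 1) * ((x2 + x1*x6) * (x3 + x1*x5))
      \<le> x2*x3 + x5*x6 + x1*x2*x5 + x1*x3*x6 - x1^2*x4 + x4"
    unfolding D_def .
qed (use assms in auto)

lemma delta_bound_le:
  fixes \<delta> :: real
  assumes "0 \<le> \<delta>" "\<delta> \<le> 1"
  shows "(-2*\<delta>^2 - 2*\<delta> + 4) / (\<delta>^2 + 10*\<delta> + 4) \<le> 2 * (1 - \<delta>) / (2 + \<delta>)"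
proof -
  have "(2 + \<delta>) * (2 + \<delta>) \<le> \<delta>^2 + 10*\<delta> + 4"
    using assms by (simp add: algebra_simps power2_eq_square)
  then have "2 * (1 - \<delta>) * ((2 + \<delta>) * (2 + \<delta>)) \<le> 2 * (1 - \<delta>) * (\<delta>^2 + 10*\<delta> + 4)"
    using assms by (intro mult_left_mono) auto
  moreover have "\<delta>^2 + 10*\<delta> + 4 > 0" using assms by (simp add: add_nonneg_pos)
  ultimately show ?thesis
    using assms by (simp add: divide_simps algebra_simps power2_eq_square)
qed

theorem lemma3p3:
  fixes eps delta x1 x2 x3 x4 x5 x6 :: real
  assumes "0 < eps" "eps < pi"
    and "0 < delta" "delta < 1"
    and "(-2*delta^2 - 2*delta + 4) / (delta^2 + 10*delta + 4) \<ge> cos eps"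
    and "x1 > 1" "x2 > 1" "x3 > 1" "x4 > 1" "x5 > 1" "x6 > 1"
    and "x2 \<le> 2" "x3 \<le> 2" "x4 \<le> 2" "x5 \<le> 2" "x6 \<le> 2"
    and "x1 = 1 + delta"
  shows "phi x1 x2 x3 x4 x5 x6 \<ge> (-2*delta^2 - 2*delta + 4) / (delta^2 + 10*delta + 4)
    \<and> (-2*delta^2 - 2*delta + 4) / (delta^2 + 10*delta + 4) \<ge> cos eps
    \<and> cos (arccos (max (-1) (min (phi x1 x2 x3 x4 x5 x6) 1))) \<ge> cos eps"
proof -
  have "(-2*delta^2 - 2*delta + 4) / (delta^2 + 10*delta + 4) \<le> 2 * (1 - delta) / (2 + delta)"
    using assms by (intro delta_bound_le) auto
  also have "\<dots> = 2 * (2 - x1) / (x1 + 1)"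
    using assms by simp
  also have "\<dots> \<le> phi x1 x2 x3 x4 x5 x6"
    using assms by (intro phi_lower_bound) auto
  finally have phi_ge: "(-2*delta^2 - 2*delta + 4) / (delta^2 + 10*delta + 4) \<le> phi x1 x2 x3 x4 x5 x6" .
  have "cos (arccos (max (-1) (min (phi x1 x2 x3 x4 x5 x6) 1)))
      = max (-1) (min (phi x1 x2 x3 x4 x5 x6) 1)"
    by (intro cos_arccos) auto
  moreover have "cos eps \<le> min (phi x1 x2 x3 x4 x5 x6) 1"
    using phi_ge assms(5) by simp
  ultimately show ?thesis
    using phi_ge assms(5) by linarith
qed

end
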